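(* Let $c>0$ and let $F$ be defined by $$F(\theta)=\frac{\int_{0}^{\theta}\int_{0}^{\theta}e^{c\cos(a-b)}\,da\,db}{2\pi\int_{0}^{2\pi}e^{c\cos a}\,da}-\Big(\frac{\theta}{2\pi}\Big)^{2}.$$ Let $\theta_1,\theta_2,\theta_3\ge0$ with $\theta_1+\theta_2+\theta_3=2\pi$ and $\theta_i\le\pi$ for all $1\le i\le3$. Then $$-3F(2\pi/3)+\sum_{i=1}^3F(\theta_i)\le 0.158\Big(-1+\Big(1-\frac{3^{4/3}}{5}\Big)e^{-c\pi/2}+\frac{3^{4/3}}{5}e^{-c\pi/6}\Big)\sum_{i=1}^3\Big(\frac{\theta_i}{2\pi}-\frac13\Big)^2.$$
   Context: In the paper $c=\rho rs/(1-\rho^2)$ with $0<\rho<1$, $r,s>0$. *)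

theory Defs
  imports "HOL-Analysis.Analysis"
begin

definition F :: "real \<Rightarrow> real \<Rightarrow> real" where
  "F c \<theta> =
     integral {0..\<theta>} (\<lambda>b. integral {0..\<theta>} (\<lambda>a. exp (c * cos (a - b))))
       / (2 * pi * integral {0..2*pi} (\<lambda>a. exp (c * cos a)))
     - (\<theta> / (2 * pi))^2"

end

theory Submission
  imports Defs
begin

text \<open>Write \<open>F\<close> through the second primitive \<open>Q c\<close> of the kernel \<open>exp (c cos t)\<close>, normalised by
  \<open>Q c 0 = Q' c 0 = 0\<close>. With \<open>K\<close> minus the constant factor of the right-hand side and
  \<open>lam = (1 - K) J c / pi\<close>, the inequality becomes \<open>\<Sum>i. defect c lam \<theta>\<^sub>i \<le> 0\<close>, where
  \<open>defect c lam\<close> is \<open>Q c\<close> minus its tangent line at \<open>2 pi/3\<close> and minus a parabola of curvature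
  \<open>lam\<close>. By Taylor's formula, \<open>defect c lam (2 pi/3 + d)\<close> is \<open>d\<^sup>2\<close> times a weighted mean of
  \<open>kern c - lam\<close> over the segment, and the kernel decreases on \<open>[0, pi]\<close>. If two angles exceed
  \<open>2 pi/3\<close>, concavity of the defect there and monotonicity of these means push the configuration to
  \<open>(0, pi, pi)\<close>; if two angles are below \<open>2 pi/3\<close>, the same means push it to \<open>(pi/3, 2 pi/3, pi)\<close>.
  At these two configurations the defect sum is an integral of \<open>c p(t) sin t exp (c cos t)\<close> for explicit
  piecewise quadratic weights \<open>p\<close>; bounding the kernel by constants on each piece leaves elementary
  inequalities in \<open>c\<close> and \<open>K\<close>, which are checked numerically.\<close>

section \<open>The kernel and its primitives\<close>

definition kern :: "real \<Rightarrow> real \<Rightarrow> real" where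
  "kern c t = exp (c * cos t)"

text \<open>Any base point below \<open>-pi\<close> would do: only differences of values at arguments in
  \<open>[-pi, pi]\<close> are used, and these need the primitives to be differentiable there.\<close>

definition kern_prim :: "real \<Rightarrow> real \<Rightarrow> real" where
  "kern_prim c x = integral {-2*pi..x} (kern c)"

definition kern_prim2 :: "real \<Rightarrow> real \<Rightarrow> real" where
  "kern_prim2 c x = integral {-2*pi..x} (kern_prim c)"

definition Q :: "real \<Rightarrow> real \<Rightarrow> real" where
  "Q c x = kern_prim2 c x - kern_prim2 c 0 - kern_prim c 0 * x"

definition J :: "real \<Rightarrow> real" where
  "J c = kern_prim c pi - kern_prim c 0"

lemma has_real_derivative_integral_upper:
  fixes f :: "real \<Rightarrow> real"
  assumes "continuous_on {a..b} f" "a < x" "x < b"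
  shows "((\<lambda>y. integral {a..y} f) has_real_derivative f x) (at x)"
proof -
  have "((\<lambda>y. integral {a..y} f) has_real_derivative f x) (at x within {a..b})"
    by (rule integral_has_real_derivative) (use assms in auto)
  moreover have "at x within {a..b} = at x"
    by (rule at_within_interior) (use assms in simp)
  ultimately show ?thesis by simp
qed

lemma has_integral_of_real_derivative:
  fixes f f' :: "real \<Rightarrow> real"
  assumes "a \<le> b" "\<And>x. x \<in> {a..b} \<Longrightarrow> (f has_real_derivative f' x) (at x)"
  shows "(f' has_integral (f b - f a)) {a..b}"
  by (rule fundamental_theorem_of_calculus)
     (use assms in \<open>auto simp: has_real_derivative_iff_has_vector_derivative[symmetric]
                          intro: has_field_derivative_at_within\<close>)

lemma eq_of_zero_real_derivative:
  fixes f :: "real \<Rightarrow> real"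
  assumes "a \<le> b" "\<And>x. x \<in> {a..b} \<Longrightarrow> (f has_real_derivative 0) (at x)"
  shows "f b = f a"
  using has_integral_of_real_derivative[OF assms] has_integral_unique has_integral_0 by force

lemma kern_continuous_on: "continuous_on S (kern c)"
  unfolding kern_def by (intro continuous_intros)

lemma kern_pos: "kern c t > 0"
  unfolding kern_def by simp

lemma kern_mono: "c \<ge> 0 \<Longrightarrow> cos x \<le> cos y \<Longrightarrow> kern c x \<le> kern c y"
  unfolding kern_def by (simp add: mult_left_mono)

lemma kern_antimono:
  assumes "c \<ge> 0" "0 \<le> x" "x \<le> y" "y \<le> pi"
  shows "kern c y \<le> kern c x"
  by (rule kern_mono) (use assms in \<open>auto simp: cos_mono_le_eq\<close>)

lemma kern_prim_continuous_on: "continuous_on {-2*pi..b} (kern_prim c)"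
  unfolding kern_prim_def
  by (rule indefinite_integral_continuous_1, rule integrable_continuous_real, rule kern_continuous_on)

lemma kern_prim_has_real_derivative:
  "x > -2*pi \<Longrightarrow> (kern_prim c has_real_derivative kern c x) (at x)"
  unfolding kern_prim_def[abs_def]
  by (rule has_real_derivative_integral_upper[where b = "x+1"]) (auto intro: kern_continuous_on)

lemma kern_prim2_has_real_derivative:
  "x > -2*pi \<Longrightarrow> (kern_prim2 c has_real_derivative kern_prim c x) (at x)"
  unfolding kern_prim2_def[abs_def]
  by (rule has_real_derivative_integral_upper[where b = "x+1"]) (use kern_prim_continuous_on in auto)

lemma kern_prim_chain [derivative_intros]:
  "(h has_real_derivative h') (at x within S) \<Longrightarrow> h x > -2*pi \<Longrightarrow>
   ((\<lambda>y. kern_prim c (h y)) has_real_derivative kern c (h x) * h') (at x within S)"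
  by (rule DERIV_chain2[OF kern_prim_has_real_derivative])

lemma kern_prim2_chain [derivative_intros]:
  "(h has_real_derivative h') (at x within S) \<Longrightarrow> h x > -2*pi \<Longrightarrow>
   ((\<lambda>y. kern_prim2 c (h y)) has_real_derivative kern_prim c (h x) * h') (at x within S)"
  by (rule DERIV_chain2[OF kern_prim2_has_real_derivative])

lemma Q_has_real_derivative:
  "x > -2*pi \<Longrightarrow> (Q c has_real_derivative kern_prim c x - kern_prim c 0) (at x)"
  unfolding Q_def[abs_def] by (auto intro!: derivative_eq_intros)

lemma kern_prim_reflect:
  assumes "0 \<le> b" "b \<le> pi"
  shows "kern_prim c (-b) = 2 * kern_prim c 0 - kern_prim c b"
proof -
  have "(\<lambda>x. kern_prim c (-x) + kern_prim c x) b = (\<lambda>x. kern_prim c (-x) + kern_prim c x) 0"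
    by (rule eq_of_zero_real_derivative[where f = "\<lambda>x. kern_prim c (-x) + kern_prim c x"])
       (use assms pi_gt3 in \<open>auto intro!: derivative_eq_intros simp: kern_def\<close>)
  thus ?thesis by simp
qed

lemma kern_prim_2pi: "kern_prim c (2*pi) = 2 * kern_prim c pi - kern_prim c 0"
proof -
  have "(\<lambda>x. kern_prim c (pi + x) + kern_prim c (pi - x)) pi
      = (\<lambda>x. kern_prim c (pi + x) + kern_prim c (pi - x)) 0"
    by (rule eq_of_zero_real_derivative[where f = "\<lambda>x. kern_prim c (pi + x) + kern_prim c (pi - x)"])
       (use pi_gt3 in \<open>auto intro!: derivative_eq_intros simp: kern_def cos_add cos_diff\<close>)
  thus ?thesis by simp
qed

lemma integral_kern_0_2pi: "integral {0..2*pi} (\<lambda>a. exp (c * cos a)) = 2 * J c"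
proof -
  have "(kern c has_integral (kern_prim c (2*pi) - kern_prim c 0)) {0..2*pi}"
    by (rule has_integral_of_real_derivative) (use pi_gt3 in \<open>auto intro!: kern_prim_has_real_derivative\<close>)
  thus ?thesis
    unfolding J_def kern_prim_2pi by (simp add: kern_def[abs_def] integral_unique)
qed

lemma double_integral_kern_eq_Q:
  assumes "0 \<le> \<theta>" "\<theta> \<le> pi"
  shows "integral {0..\<theta>} (\<lambda>b. integral {0..\<theta>} (\<lambda>a. exp (c * cos (a - b)))) = 2 * Q c \<theta>"
proof -
  have inner: "integral {0..\<theta>} (\<lambda>a. exp (c * cos (a - b)))
      = kern_prim c (\<theta> - b) + kern_prim c b - 2 * kern_prim c 0" if b: "b \<in> {0..\<theta>}" for b
  proof -
    have "((\<lambda>a. kern c (a - b)) has_integral (kern_prim c (\<theta> - b) - kern_prim c (0 - b))) {0..\<theta>}"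
      by (rule has_integral_of_real_derivative[where f = "\<lambda>a. kern_prim c (a - b)"])
         (use assms b pi_gt3 in \<open>auto intro!: derivative_eq_intros\<close>)
    thus ?thesis
      using kern_prim_reflect[of b c] b assms by (simp add: kern_def[abs_def] integral_unique)
  qed
  have "((\<lambda>b. kern_prim c (\<theta> - b) + kern_prim c b - 2 * kern_prim c 0) has_integral
      ((\<lambda>b. kern_prim2 c b - kern_prim2 c (\<theta> - b) - 2 * kern_prim c 0 * b) \<theta>
     - (\<lambda>b. kern_prim2 c b - kern_prim2 c (\<theta> - b) - 2 * kern_prim c 0 * b) 0)) {0..\<theta>}"
    by (rule has_integral_of_real_derivative)
       (use assms pi_gt3 in \<open>auto intro!: derivative_eq_intros\<close>)
  hence "integral {0..\<theta>} (\<lambda>b. kern_prim c (\<theta> - b) + kern_prim c b - 2 * kern_prim c 0) = 2 * Q c \<theta>"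
    by (simp add: Q_def integral_unique)
  moreover have "integral {0..\<theta>} (\<lambda>b. integral {0..\<theta>} (\<lambda>a. exp (c * cos (a - b))))
      = integral {0..\<theta>} (\<lambda>b. kern_prim c (\<theta> - b) + kern_prim c b - 2 * kern_prim c 0)"
    by (rule integral_cong) (use inner in auto)
  ultimately show ?thesis by simp
qed

lemma F_eq_Q:
  assumes "0 \<le> \<theta>" "\<theta> \<le> pi"
  shows "F c \<theta> = Q c \<theta> / (2 * pi * J c) - (\<theta> / (2*pi))^2"
  unfolding F_def double_integral_kern_eq_Q[OF assms] integral_kern_0_2pi by simp

section \<open>Taylor expansion of \<open>Q\<close> at \<open>2 pi/3\<close>\<close>

definition t0 :: real where
  "t0 = 2 * pi / 3"

lemma t0_pos: "0 < t0" and t0_less_pi: "t0 < pi"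
  unfolding t0_def using pi_gt3 by auto

lemma kern_t0: "kern c t0 = exp (- c / 2)"
  unfolding kern_def t0_def by (simp add: cos_120)

definition defect :: "real \<Rightarrow> real \<Rightarrow> real \<Rightarrow> real" where
  "defect c lam x = Q c x - Q c t0 - (kern_prim c t0 - kern_prim c 0) * (x - t0) - lam * (x - t0)^2 / 2"

definition defect_rem :: "real \<Rightarrow> real \<Rightarrow> real \<Rightarrow> real" where
  "defect_rem c lam d = integral {0..1} (\<lambda>s. (1 - s) * (kern c (t0 + s * d) - lam))"

lemma defect_rem_has_integral:
  "((\<lambda>s. (1 - s) * (kern c (t0 + s * d) - lam)) has_integral defect_rem c lam d) {0..1}"
  unfolding defect_rem_def
  by (rule integrable_integral, rule integrable_continuous_real)
     (auto simp: kern_def intro!: continuous_intros)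

lemma defect_eq_rem:
  assumes "- t0 \<le> d"
  shows "defect c lam (t0 + d) = d^2 * defect_rem c lam d"
proof -
  have arg: "-2*pi < t0 + s * d" if "s \<in> {0..1}" for s
  proof -
    have "0 \<le> s * d \<or> 0 \<le> (1 - s) * (- d)"
      using that by (cases "d \<ge> 0") (auto simp: mult_nonneg_nonpos)
    hence "- t0 \<le> s * d"
      using assms t0_pos by (auto simp: algebra_simps)
    thus ?thesis using t0_pos t0_less_pi by linarith
  qed
  define G where "G s = kern_prim2 c (t0 + s * d) + (1 - s) * d * kern_prim c (t0 + s * d)
    + lam * d^2 * (1 - s)^2 / 2" for s
  have "((\<lambda>s. d^2 * ((1 - s) * (kern c (t0 + s * d) - lam))) has_integral (G 1 - G 0)) {0..1}"
  proof (rule has_integral_of_real_derivative)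
    fix s :: real assume "s \<in> {0..1}"
    from arg[OF this] have "-2*pi < t0 + d * s" by (simp add: mult.commute)
    thus "(G has_real_derivative d^2 * ((1 - s) * (kern c (t0 + s * d) - lam))) (at s)"
      unfolding G_def by (auto intro!: derivative_eq_intros simp: power2_eq_square field_simps)
  qed simp
  moreover have "G 1 - G 0 = defect c lam (t0 + d)"
    unfolding G_def defect_def Q_def by (simp add: power2_eq_square algebra_simps)
  ultimately show ?thesis
    using has_integral_mult_right[OF defect_rem_has_integral, of "d^2" c d lam]
    by (metis has_integral_unique)
qed

lemma has_integral_one_minus: "((\<lambda>s::real. 1 - s) has_integral 1 / 2) {0..1}"
proof -
  have "((\<lambda>s::real. 1 - s) has_integral ((\<lambda>s. s - s^2 / 2) 1 - (\<lambda>s. s - s^2 / 2) 0)) {0..1}"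
    by (rule has_integral_of_real_derivative) (auto intro!: derivative_eq_intros)
  thus ?thesis by simp
qed

lemma defect_rem_0: "defect_rem c lam 0 = (kern c t0 - lam) / 2"
  using has_integral_mult_left[OF has_integral_one_minus, of "kern c t0 - lam"]
        defect_rem_has_integral[of c 0 lam]
  by (auto dest: has_integral_unique)

lemma defect_rem_combination_le:
  assumes "w \<ge> 0"
    and "\<And>s. s \<in> {0..1} \<Longrightarrow>
           kern c (t0 + s * a) + w * kern c (t0 + s * b) \<le> kern c (t0 + s * a') + w * kern c (t0 + s * b')"
  shows "defect_rem c lam a + w * defect_rem c lam b \<le> defect_rem c lam a' + w * defect_rem c lam b'"
proof (rule has_integral_le[OF
      has_integral_add[OF defect_rem_has_integral has_integral_mult_right[OF defect_rem_has_integral]]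
      has_integral_add[OF defect_rem_has_integral has_integral_mult_right[OF defect_rem_has_integral]]])
  fix s :: real assume s: "s \<in> {0..1}"
  have "(1 - s) * (kern c (t0 + s * a) + w * kern c (t0 + s * b) - (1 + w) * lam)
      \<le> (1 - s) * (kern c (t0 + s * a') + w * kern c (t0 + s * b') - (1 + w) * lam)"
    using assms(2)[OF s] s by (intro mult_left_mono) auto
  thus "(1 - s) * (kern c (t0 + s * a) - lam) + w * ((1 - s) * (kern c (t0 + s * b) - lam))
      \<le> (1 - s) * (kern c (t0 + s * a') - lam) + w * ((1 - s) * (kern c (t0 + s * b') - lam))"
    by (simp add: algebra_simps)
qed

lemma defect_rem_mono:
  "(\<And>s. s \<in> {0..1} \<Longrightarrow> kern c (t0 + s * a) \<le> kern c (t0 + s * a')) \<Longrightarrow>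
   defect_rem c lam a \<le> defect_rem c lam a'"
  using defect_rem_combination_le[of 0 c a _ a' _ lam] by simp

section \<open>Reduction to two extreme configurations\<close>

lemma defect_concave_on:
  assumes "c \<ge> 0" "kern c t0 \<le> lam"
  shows "concave_on {t0..pi} (defect c lam)"
proof (rule f''_le0_imp_concave[where f' = "\<lambda>x. kern_prim c x - kern_prim c t0 - lam * (x - t0)"
                                   and f'' = "\<lambda>x. kern c x - lam"])
  fix x assume x: "x \<in> {t0..pi}"
  hence "-2*pi < x" using t0_pos pi_gt3 by auto
  thus "(defect c lam has_real_derivative kern_prim c x - kern_prim c t0 - lam * (x - t0)) (at x)"
    unfolding defect_def[abs_def]
    by (auto intro!: derivative_eq_intros Q_has_real_derivative simp: field_simps)
  show "((\<lambda>x. kern_prim c x - kern_prim c t0 - lam * (x - t0)) has_real_derivative kern c x - lam) (at x)"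
    using \<open>-2*pi < x\<close> by (auto intro!: derivative_eq_intros kern_prim_has_real_derivative)
  show "kern c x - lam \<le> 0"
    using kern_antimono[of c t0 x] assms x t0_pos by auto
qed simp

lemma defect_midpoint:
  assumes "c \<ge> 0" "kern c t0 \<le> lam" "a \<in> {t0..pi}" "b \<in> {t0..pi}"
  shows "defect c lam a + defect c lam b \<le> 2 * defect c lam ((a + b) / 2)"
  using concave_onD[OF defect_concave_on[OF assms(1,2)], of "1/2" a b] assms(3,4)
  by (simp add: field_simps)

lemma kern_pair_deriv_nonneg:
  assumes "c \<ge> 0" "0 \<le> w" "w \<le> pi/3"
  shows "sin w * kern c (pi - w) / 4 \<le> sin (2*w) * kern c (2*w)"
proof -
  have sin_w: "sin w \<ge> 0" using assms pi_gt3 by (intro sin_ge_zero) auto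
  have cos_w: "cos w \<ge> 1/2"
    using cos_mono_le_eq[of "pi/3" w] assms pi_gt3 by (simp add: cos_60)
  have "cos (2*w) + cos w = (2 * cos w - 1) * (cos w + 1)"
    by (simp only: cos_double_cos) (simp add: power2_eq_square algebra_simps)
  also have "\<dots> \<ge> 0" using cos_w by (intro mult_nonneg_nonneg) auto
  finally have "kern c (pi - w) \<le> kern c (2*w)" by (intro kern_mono assms) simp
  hence "sin w * kern c (pi - w) \<le> sin w * kern c (2*w)"
    using sin_w by (intro mult_left_mono)
  moreover have "0 \<le> sin w * kern c (2*w)"
    using sin_w kern_pos[of c "2*w"] by simp
  ultimately have "sin w * kern c (pi - w) / 4 \<le> sin w * kern c (2*w)"
    by linarith
  also have "\<dots> \<le> (2 * sin w * cos w) * kern c (2*w)"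
    using sin_w cos_w kern_pos[of c "2*w"] mult_left_mono[of 1 "2 * cos w" "sin w"]
    by (intro mult_right_mono) (auto simp: algebra_simps)
  finally show ?thesis by (simp add: sin_double)
qed

lemma kern_pair_mono:
  assumes "c \<ge> 0" "0 \<le> u" "u \<le> v" "v \<le> t0"
  shows "kern c (t0 - u) + kern c (t0 + u/2) / 2 \<le> kern c (t0 - v) + kern c (t0 + v/2) / 2"
proof (rule DERIV_nonneg_imp_nondecreasing[OF assms(3), where f = "\<lambda>u. kern c (t0 - u) + kern c (t0 + u/2) / 2"])
  fix x assume x: "u \<le> x" "x \<le> v"
  define w where "w = (t0 - x) / 2"
  have e: "t0 - x = 2*w" "t0 + x/2 = pi - w" unfolding w_def t0_def by (simp_all add: field_simps)
  have "sin w * kern c (pi - w) / 4 \<le> sin (2*w) * kern c (2*w)"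
    by (rule kern_pair_deriv_nonneg) (use assms x in \<open>auto simp: w_def t0_def\<close>)
  from mult_left_mono[OF this assms(1)]
  have "0 \<le> c * sin (t0 - x) * kern c (t0 - x) - c/4 * sin (t0 + x/2) * kern c (t0 + x/2)"
    unfolding e by (simp add: algebra_simps)
  moreover have "((\<lambda>u. kern c (t0 - u) + kern c (t0 + u/2) / 2) has_real_derivative
      c * sin (t0 - x) * kern c (t0 - x) - c/4 * sin (t0 + x/2) * kern c (t0 + x/2)) (at x)"
    unfolding kern_def by (auto intro!: derivative_eq_intros simp: algebra_simps)
  ultimately show "\<exists>y. ((\<lambda>u. kern c (t0 - u) + kern c (t0 + u/2) / 2) has_real_derivative y) (at x) \<and> 0 \<le> y"
    by blast
qed

lemma kern_sym_pair_deriv_nonneg: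
  assumes "c \<ge> 0" "0 \<le> x" "x \<le> pi/3"
  shows "sin (t0 + x) * kern c (t0 + x) \<le> sin (t0 - x) * kern c (t0 - x)"
proof -
  have sin_x: "sin x \<ge> 0" using assms pi_gt3 by (intro sin_ge_zero) auto
  have "sin (t0 - x) - sin (t0 + x) = sin x"
    unfolding sin_diff sin_add t0_def by (simp add: cos_120)
  moreover have "cos (t0 - x) - cos (t0 + x) = sqrt 3 * sin x"
    unfolding cos_diff cos_add t0_def by (simp add: sin_120)
  hence "kern c (t0 + x) \<le> kern c (t0 - x)"
    using sin_x by (intro kern_mono assms(1)) (simp add: algebra_simps)
  moreover have "sin (t0 + x) \<ge> 0"
    using assms t0_pos unfolding t0_def by (intro sin_ge_zero) auto
  ultimately have "sin (t0 + x) * kern c (t0 + x) \<le> sin (t0 + x) * kern c (t0 - x)"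
    and "sin (t0 + x) \<le> sin (t0 - x)"
    using sin_x by (auto intro: mult_left_mono)
  thus ?thesis
    using kern_pos[of c "t0 - x"] by (auto intro: order_trans mult_right_mono)
qed

lemma kern_sym_pair_mono:
  assumes "c \<ge> 0" "0 \<le> u" "u \<le> v" "v \<le> pi/3"
  shows "kern c (t0 - u) + kern c (t0 + u) \<le> kern c (t0 - v) + kern c (t0 + v)"
proof (rule DERIV_nonneg_imp_nondecreasing[OF assms(3), where f = "\<lambda>u. kern c (t0 - u) + kern c (t0 + u)"])
  fix x assume x: "u \<le> x" "x \<le> v"
  have "0 \<le> c * sin (t0 - x) * kern c (t0 - x) - c * sin (t0 + x) * kern c (t0 + x)"
    using mult_left_mono[OF kern_sym_pair_deriv_nonneg, of c x c] assms x by (simp add: algebra_simps)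
  moreover have "((\<lambda>u. kern c (t0 - u) + kern c (t0 + u)) has_real_derivative
      c * sin (t0 - x) * kern c (t0 - x) - c * sin (t0 + x) * kern c (t0 + x)) (at x)"
    unfolding kern_def by (auto intro!: derivative_eq_intros simp: algebra_simps)
  ultimately show "\<exists>y. ((\<lambda>u. kern c (t0 - u) + kern c (t0 + u)) has_real_derivative y) (at x) \<and> 0 \<le> y"
    by blast
qed

lemma defect_one_below:
  assumes "c \<ge> 0" "defect c lam 0 + 2 * defect c lam pi \<le> 0" "0 \<le> d" "d \<le> t0"
  shows "defect c lam (t0 - d) + 2 * defect c lam (t0 + d/2) \<le> 0"
proof -
  have "defect_rem c lam (-d) + 1/2 * defect_rem c lam (d/2)
      \<le> defect_rem c lam (-t0) + 1/2 * defect_rem c lam (t0/2)"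
  proof (rule defect_rem_combination_le)
    fix s :: real assume s: "s \<in> {0..1}"
    have "s * d \<le> s * t0" "s * t0 \<le> t0"
      using s assms t0_pos by (auto intro: mult_left_mono simp: mult_left_le_one_le)
    thus "kern c (t0 + s * - d) + 1/2 * kern c (t0 + s * (d/2))
        \<le> kern c (t0 + s * - t0) + 1/2 * kern c (t0 + s * (t0/2))"
      using kern_pair_mono[of c "s * d" "s * t0"] assms s by simp
  qed simp
  moreover have "t0^2 * (defect_rem c lam (-t0) + 1/2 * defect_rem c lam (t0/2))
      = defect c lam 0 + 2 * defect c lam pi"
    using defect_eq_rem[of "-t0" c lam] defect_eq_rem[of "t0/2" c lam] t0_pos
    by (simp add: t0_def power2_eq_square field_simps)
  hence "t0^2 * (defect_rem c lam (-t0) + 1/2 * defect_rem c lam (t0/2)) \<le> 0"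
    using assms(2) by simp
  hence "defect_rem c lam (-t0) + 1/2 * defect_rem c lam (t0/2) \<le> 0"
    using t0_pos by (simp add: mult_le_0_iff)
  moreover have "defect c lam (t0 - d) + 2 * defect c lam (t0 + d/2)
      = d^2 * (defect_rem c lam (-d) + 1/2 * defect_rem c lam (d/2))"
    using defect_eq_rem[of "-d" c lam] defect_eq_rem[of "d/2" c lam] assms t0_pos
    by (simp add: power2_eq_square field_simps)
  ultimately show ?thesis by (simp add: mult_nonneg_nonpos)
qed

lemma defect_sum_one_below:
  assumes "c \<ge> 0" "kern c t0 \<le> lam" "defect c lam 0 + 2 * defect c lam pi \<le> 0"
    and "0 \<le> x" "t0 \<le> y" "t0 \<le> z" "y \<le> pi" "z \<le> pi" "x + y + z = 3 * t0"
  shows "defect c lam x + defect c lam y + defect c lam z \<le> 0"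
proof -
  have "y + z = 3 * t0 - x" using assms(9) by linarith
  hence mid: "(y + z) / 2 = t0 + (t0 - x) / 2" by (simp add: field_simps)
  have "defect c lam y + defect c lam z \<le> 2 * defect c lam ((y + z) / 2)"
    by (rule defect_midpoint) (use assms in auto)
  hence "defect c lam y + defect c lam z \<le> 2 * defect c lam (t0 + (t0 - x) / 2)"
    unfolding mid .
  moreover have "defect c lam (t0 - (t0 - x)) + 2 * defect c lam (t0 + (t0 - x) / 2) \<le> 0"
    by (rule defect_one_below) (use assms in auto)
  ultimately show ?thesis by simp
qed

lemma two_below_combination_nonpos:
  fixes d1 d2 r r1 r2 q :: real
  assumes "0 \<le> d1" "0 \<le> d2" "r1 \<le> r" "r2 \<le> r" "q \<le> 0" "r + q \<le> 0"
  shows "d1^2 * r1 + d2^2 * r2 + (d1 + d2)^2 * q \<le> 0"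
proof -
  have "d1^2 * r1 + d2^2 * r2 \<le> (d1^2 + d2^2) * r"
    using assms by (simp add: distrib_right add_mono mult_left_mono)
  also have "\<dots> \<le> (d1^2 + d2^2) * max r 0"
    by (intro mult_left_mono) auto
  also have "\<dots> \<le> (d1 + d2)^2 * max r 0"
    using assms by (intro mult_right_mono) (auto simp: power2_eq_square algebra_simps)
  finally have "d1^2 * r1 + d2^2 * r2 \<le> (d1 + d2)^2 * max r 0" .
  moreover have "(d1 + d2)^2 * (max r 0 + q) \<le> 0"
    using assms by (intro mult_nonneg_nonpos) auto
  ultimately show ?thesis by (simp add: algebra_simps)
qed

lemma defect_rem_sym_sum_nonpos:
  assumes "c \<ge> 0" "defect c lam (pi/3) + defect c lam pi \<le> 0" "0 \<le> D" "D \<le> pi/3"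
  shows "defect_rem c lam (-D) + defect_rem c lam D \<le> 0"
proof -
  have "defect_rem c lam (-D) + 1 * defect_rem c lam D
      \<le> defect_rem c lam (-(pi/3)) + 1 * defect_rem c lam (pi/3)"
  proof (rule defect_rem_combination_le)
    fix s :: real assume s: "s \<in> {0..1}"
    have "s * D \<le> s * (pi/3)" "s * (pi/3) \<le> pi/3"
      using s assms pi_gt3 mult_left_mono[of D "pi/3" s] by (auto simp: mult_left_le_one_le)
    thus "kern c (t0 + s * - D) + 1 * kern c (t0 + s * D)
        \<le> kern c (t0 + s * - (pi/3)) + 1 * kern c (t0 + s * (pi/3))"
      using kern_sym_pair_mono[of c "s * D" "s * (pi/3)"] assms s by simp
  qed simp
  moreover have "(pi/3)^2 * (defect_rem c lam (-(pi/3)) + defect_rem c lam (pi/3))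
      = defect c lam (pi/3) + defect c lam pi"
    using defect_eq_rem[of "-(pi/3)" c lam] defect_eq_rem[of "pi/3" c lam] t0_pos
    by (simp add: t0_def field_simps)
  hence "(pi/3)^2 * (defect_rem c lam (-(pi/3)) + defect_rem c lam (pi/3)) \<le> 0"
    using assms(2) by simp
  hence "defect_rem c lam (-(pi/3)) + defect_rem c lam (pi/3) \<le> 0"
    by (simp add: mult_le_0_iff)
  ultimately show ?thesis by simp
qed

lemma defect_sum_two_below:
  assumes "c \<ge> 0" "kern c t0 \<le> lam" "defect c lam (pi/3) + defect c lam pi \<le> 0"
    and "0 \<le> d1" "0 \<le> d2" "d1 + d2 \<le> pi/3"
  shows "defect c lam (t0 - d1) + defect c lam (t0 - d2) + defect c lam (t0 + (d1 + d2)) \<le> 0"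
proof -
  define D where "D = d1 + d2"
  have D: "0 \<le> D" "D \<le> pi/3" using assms unfolding D_def by auto
  have sD: "s * D \<le> pi/3" if "s \<in> {0..1}" for s
    using mult_left_le_one_le[of D s] D that by auto
  have rem_neg: "defect_rem c lam (-e) \<le> defect_rem c lam (-D)" if "0 \<le> e" "e \<le> D" for e
  proof (rule defect_rem_mono)
    fix s :: real assume s: "s \<in> {0..1}"
    have "0 \<le> s * e" "s * e \<le> s * D" using s that by (auto intro: mult_left_mono)
    thus "kern c (t0 + s * - e) \<le> kern c (t0 + s * - D)"
      using kern_antimono[of c "t0 - s * D" "t0 - s * e"] assms(1) sD[OF s] t0_less_pi
      by (simp add: t0_def)
  qed
  have "defect_rem c lam D \<le> defect_rem c lam 0"
  proof (rule defect_rem_mono)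
    fix s :: real assume s: "s \<in> {0..1}"
    have "0 \<le> s * D" using s D by simp
    thus "kern c (t0 + s * D) \<le> kern c (t0 + s * 0)"
      using kern_antimono[of c t0 "t0 + s * D"] assms(1) sD[OF s] t0_pos by (simp add: t0_def)
  qed
  hence rem_pos: "defect_rem c lam D \<le> 0"
    using assms(2) by (simp add: defect_rem_0)
  have rem_sum: "defect_rem c lam (-D) + defect_rem c lam D \<le> 0"
    by (rule defect_rem_sym_sum_nonpos[OF assms(1,3) D])
  have "defect_rem c lam (-d1) \<le> defect_rem c lam (-D)" "defect_rem c lam (-d2) \<le> defect_rem c lam (-D)"
    using assms by (intro rem_neg; simp add: D_def)+
  from two_below_combination_nonpos[OF assms(4,5) this rem_pos rem_sum]
  have "d1^2 * defect_rem c lam (-d1) + d2^2 * defect_rem c lam (-d2) + D^2 * defect_rem c lam D \<le> 0"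
    by (simp add: D_def)
  moreover have "- t0 \<le> - d1" "- t0 \<le> - d2" "- t0 \<le> D"
    using assms D t0_pos unfolding t0_def by auto
  ultimately show ?thesis
    using defect_eq_rem[of "-d1" c lam] defect_eq_rem[of "-d2" c lam] defect_eq_rem[of D c lam]
    by (simp add: D_def)
qed

lemma defect_sum_sorted_nonpos:
  assumes "c \<ge> 0" "kern c t0 \<le> lam"
    and "defect c lam (pi/3) + defect c lam pi \<le> 0" "defect c lam 0 + 2 * defect c lam pi \<le> 0"
    and "0 \<le> x" "x \<le> y" "y \<le> z" "z \<le> pi" "x + y + z = 3 * t0"
  shows "defect c lam x + defect c lam y + defect c lam z \<le> 0"
proof (cases "y \<le> t0")
  case True
  have "defect c lam (t0 - (t0 - x)) + defect c lam (t0 - (t0 - y)) + defect c lam (t0 + ((t0 - x) + (t0 - y))) \<le> 0"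
    by (rule defect_sum_two_below[OF assms(1-3)]) (use assms True in \<open>auto simp: t0_def\<close>)
  moreover have "t0 + ((t0 - x) + (t0 - y)) = z" using assms(9) by linarith
  ultimately show ?thesis by simp
next
  case False
  thus ?thesis by (intro defect_sum_one_below[OF assms(1,2,4)]) (use assms in auto)
qed

lemma defect_sum_nonpos:
  assumes "c \<ge> 0" "kern c t0 \<le> lam"
    and "defect c lam (pi/3) + defect c lam pi \<le> 0" "defect c lam 0 + 2 * defect c lam pi \<le> 0"
    and "0 \<le> x" "0 \<le> y" "0 \<le> z" "x \<le> pi" "y \<le> pi" "z \<le> pi" "x + y + z = 2 * pi"
  shows "defect c lam x + defect c lam y + defect c lam z \<le> 0"
proof -
  note sorted = defect_sum_sorted_nonpos[OF assms(1-4)]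
  have s: "x + y + z = 3 * t0" using assms(11) by (simp add: t0_def)
  show ?thesis
  proof (rule le_cases3[of x y z])
    show "x \<le> y \<Longrightarrow> y \<le> z \<Longrightarrow> ?thesis" using sorted[of x y z] assms s by simp
    show "y \<le> x \<Longrightarrow> x \<le> z \<Longrightarrow> ?thesis" using sorted[of y x z] assms s by (simp add: ac_simps)
    show "x \<le> z \<Longrightarrow> z \<le> y \<Longrightarrow> ?thesis" using sorted[of x z y] assms s by (simp add: ac_simps)
    show "z \<le> y \<Longrightarrow> y \<le> x \<Longrightarrow> ?thesis" using sorted[of z y x] assms s by (simp add: ac_simps)
    show "y \<le> z \<Longrightarrow> z \<le> x \<Longrightarrow> ?thesis" using sorted[of y z x] assms s by (simp add: ac_simps)
    show "z \<le> x \<Longrightarrow> x \<le> y \<Longrightarrow> ?thesis" using sorted[of z x y] assms s by (simp add: ac_simps)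
  qed
qed

section \<open>Kernel moments at the extreme configurations\<close>

text \<open>Primitives of \<open>p(t) sin t\<close> and of \<open>c p(t) sin t kern c t\<close> for \<open>p(t) = \<alpha> + \<beta> t + \<gamma> t\<^sup>2\<close>, obtained by
  integrating by parts with \<open>c sin t kern c t = - (d/dt) kern c t\<close>.\<close>

definition sin_moment_prim :: "real \<Rightarrow> real \<Rightarrow> real \<Rightarrow> real \<Rightarrow> real" where
  "sin_moment_prim \<alpha> \<beta> \<gamma> t = - ((\<alpha> + \<beta> * t + \<gamma> * t^2) * cos t) + (\<beta> + 2 * \<gamma> * t) * sin t + 2 * \<gamma> * cos t"

definition kern_moment_prim :: "real \<Rightarrow> real \<Rightarrow> real \<Rightarrow> real \<Rightarrow> real \<Rightarrow> real" where
  "kern_moment_prim c \<alpha> \<beta> \<gamma> t = - ((\<alpha> + \<beta> * t + \<gamma> * t^2) * kern c t)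
     + (\<beta> + 2 * \<gamma> * t) * (kern_prim c t - kern_prim c 0) - 2 * \<gamma> * Q c t"

lemma sin_moment_prim_has_integral:
  "a \<le> b \<Longrightarrow> ((\<lambda>t. (\<alpha> + \<beta> * t + \<gamma> * t^2) * sin t) has_integral
     (sin_moment_prim \<alpha> \<beta> \<gamma> b - sin_moment_prim \<alpha> \<beta> \<gamma> a)) {a..b}"
  unfolding sin_moment_prim_def
  by (rule has_integral_of_real_derivative)
     (auto intro!: derivative_eq_intros simp: power2_eq_square algebra_simps)

lemma kern_moment_prim_has_integral:
  assumes "a \<le> b" "-2*pi < a"
  shows "((\<lambda>t. c * (\<alpha> + \<beta> * t + \<gamma> * t^2) * sin t * kern c t) has_integral
     (kern_moment_prim c \<alpha> \<beta> \<gamma> b - kern_moment_prim c \<alpha> \<beta> \<gamma> a)) {a..b}"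
proof (rule has_integral_of_real_derivative[OF assms(1)])
  fix x assume "x \<in> {a..b}"
  hence x: "-2*pi < x" using assms by auto
  show "(kern_moment_prim c \<alpha> \<beta> \<gamma> has_real_derivative c * (\<alpha> + \<beta> * x + \<gamma> * x^2) * sin x * kern c x) (at x)"
    unfolding kern_moment_prim_def[abs_def] kern_def
    by (rule DERIV_cong, (rule derivative_intros Q_has_real_derivative[OF x] x | simp)+)
       (simp add: kern_def power2_eq_square algebra_simps)
qed

lemma kern_moment_prim_ge:
  assumes "a \<le> b" "-2*pi < a" "c \<ge> 0"
    and "\<And>t. t \<in> {a..b} \<Longrightarrow>
           m * ((\<alpha>' + \<beta>' * t + \<gamma>' * t^2) * sin t) \<le> (\<alpha> + \<beta> * t + \<gamma> * t^2) * sin t * kern c t"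
  shows "c * m * (sin_moment_prim \<alpha>' \<beta>' \<gamma>' b - sin_moment_prim \<alpha>' \<beta>' \<gamma>' a)
      \<le> kern_moment_prim c \<alpha> \<beta> \<gamma> b - kern_moment_prim c \<alpha> \<beta> \<gamma> a"
proof (rule has_integral_le[OF has_integral_mult_right[OF sin_moment_prim_has_integral[OF assms(1)]]
                              kern_moment_prim_has_integral[OF assms(1,2)]])
  fix t assume "t \<in> {a..b}"
  from mult_left_mono[OF assms(4)[OF this] assms(3)]
  show "c * m * ((\<alpha>' + \<beta>' * t + \<gamma>' * t^2) * sin t) \<le> c * (\<alpha> + \<beta> * t + \<gamma> * t^2) * sin t * kern c t"
    by (simp add: mult.assoc)
qed

lemma mult_sin_weight_le:
  fixes m p s g :: real
  assumes "0 \<le> s" "(0 \<le> p \<and> m \<le> g) \<or> (p \<le> 0 \<and> g \<le> m)"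
  shows "m * (p * s) \<le> p * s * g"
proof -
  have "p * m \<le> p * g" using assms(2) by (auto intro: mult_left_mono mult_left_mono_neg)
  from mult_right_mono[OF this assms(1)] show ?thesis by (simp add: algebra_simps)
qed

lemma mult_sin_weight_shift_le:
  fixes m p h s g :: real
  assumes "0 \<le> s" "0 \<le> g" "g \<le> m" "p \<le> h" "0 \<le> h"
  shows "m * ((p - h) * s) \<le> p * s * g"
proof -
  have "m * (p - h) \<le> p * g"
  proof (cases "p \<ge> 0")
    case True
    thus ?thesis using assms by (simp add: mult_nonneg_nonpos order_trans[OF _ mult_nonneg_nonneg])
  next
    case False
    have "m * (p - h) \<le> m * p" using assms by (simp add: mult_left_mono)
    also have "\<dots> \<le> p * g" using False assms by (simp add: mult.commute mult_left_mono_neg)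
    finally show ?thesis .
  qed
  from mult_right_mono[OF this assms(1)] show ?thesis by (simp add: algebra_simps)
qed

lemma kern_pi_third: "kern c (pi/3) = exp (c/2)"
  unfolding kern_def by (simp add: cos_60)

lemma kern_pi: "kern c pi = exp (- c)"
  unfolding kern_def by simp

lemma Q_0 [simp]: "Q c 0 = 0"
  unfolding Q_def by simp

text \<open>The weights are chosen so that the kernel moments add up exactly to the quantity controlled by
  \<open>defect c lam 0 + 2 * defect c lam pi\<close>; the extra term \<open>K pi\<^sup>2 exp (-c) / 3\<close> is the boundary
  term coming from the value \<open>- K pi\<^sup>2/3\<close> of the weight at \<open>pi\<close>.\<close>

lemma moments_0_pi_pi_identity:
  "(kern_moment_prim c 0 ((1-K)*pi/3) (-1/2) t0 - kern_moment_prim c 0 ((1-K)*pi/3) (-1/2) 0)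
   + (kern_moment_prim c (pi*t0) (-(pi+t0) - K*pi/3) 1 pi - kern_moment_prim c (pi*t0) (-(pi+t0) - K*pi/3) 1 t0)
   = 3 * Q c t0 - 2 * Q c pi + pi/3 * (1-K) * J c + K * pi^2 * exp (-c) / 3"
  unfolding kern_moment_prim_def J_def Q_0 kern_pi t0_def
  by (simp add: power2_eq_square field_simps)

lemma sin_moments_0_pi_pi:
  "sin_moment_prim 0 ((1-K)*pi/3) (-1/2) (pi/3) - sin_moment_prim 0 ((1-K)*pi/3) (-1/2) 0
     = 1/2 - pi^2/36 + K*pi^2/18 - K*pi * sqrt 3/6"
  "(sin_moment_prim 0 ((1-K)*pi/3) (-1/2) t0 - sin_moment_prim 0 ((1-K)*pi/3) (-1/2) (pi/3))
   + (sin_moment_prim (pi*t0) (-(pi+t0) - K*pi/3) 1 pi - sin_moment_prim (pi*t0) (-(pi+t0) - K*pi/3) 1 t0)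
     = (1/2 - K*pi^2/3) - (1/2 - pi^2/36 + K*pi^2/18 - K*pi * sqrt 3/6)"
  unfolding sin_moment_prim_def t0_def
  by (simp_all add: cos_60 sin_60 cos_120' sin_120' power2_eq_square field_simps)

lemma moment_0_pi_pi_on_0_pi3:
  assumes "c \<ge> 0" "0 \<le> K" "K \<le> 1/4"
  shows "c * exp (c/2) * (sin_moment_prim 0 ((1-K)*pi/3) (-1/2) (pi/3) - sin_moment_prim 0 ((1-K)*pi/3) (-1/2) 0)
      \<le> kern_moment_prim c 0 ((1-K)*pi/3) (-1/2) (pi/3) - kern_moment_prim c 0 ((1-K)*pi/3) (-1/2) 0"
proof (rule kern_moment_prim_ge)
  fix t assume "t \<in> {0..pi/3}"
  hence t: "0 \<le> t" "t \<le> pi/3" by auto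
  have "K * pi \<le> 1/4 * pi" using assms pi_gt3 by (intro mult_right_mono) auto
  moreover have "(1-K) * pi/3 = pi/3 - K * pi/3" by (simp add: field_simps)
  ultimately have "t/2 \<le> (1-K) * pi/3" using t pi_gt3 by linarith
  moreover have "0 + (1-K)*pi/3 * t + (-1/2) * t^2 = t * ((1-K) * pi/3 - t/2)"
    by (simp add: power2_eq_square algebra_simps)
  ultimately have "0 \<le> 0 + (1-K)*pi/3 * t + (-1/2) * t^2" using t by simp
  moreover have "exp (c/2) \<le> kern c t"
    using kern_antimono[of c t "pi/3"] t assms pi_gt3 unfolding kern_pi_third by auto
  ultimately show "exp (c/2) * ((0 + (1-K)*pi/3 * t + (-1/2) * t^2) * sin t)
      \<le> (0 + (1-K)*pi/3 * t + (-1/2) * t^2) * sin t * kern c t"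
    using sin_ge_zero[of t] t pi_gt3 by (intro mult_sin_weight_le) auto
qed (use assms pi_gt3 in auto)

lemma moment_0_pi_pi_on_pi3_t0:
  assumes "c \<ge> 0" "0 \<le> K" "K \<le> 1/4"
  shows "c * kern c ((1-K)*t0) * (sin_moment_prim 0 ((1-K)*pi/3) (-1/2) t0 - sin_moment_prim 0 ((1-K)*pi/3) (-1/2) (pi/3))
      \<le> kern_moment_prim c 0 ((1-K)*pi/3) (-1/2) t0 - kern_moment_prim c 0 ((1-K)*pi/3) (-1/2) (pi/3)"
proof (rule kern_moment_prim_ge)
  fix t assume "t \<in> {pi/3..t0}"
  hence t: "pi/3 \<le> t" "t \<le> t0" by auto
  define t1 where "t1 = (1-K)*t0"
  have t1: "pi/3 \<le> t1" "t1 \<le> t0"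
    using assms mult_right_mono[of "3/4" "1-K" t0] mult_left_le_one_le[of t0 "1-K"] t0_pos
    by (auto simp: t1_def t0_def)
  have p: "0 + (1-K)*pi/3 * t + (-1/2) * t^2 = (t/2) * (t1 - t)"
    by (simp add: t1_def t0_def power2_eq_square algebra_simps)
  have "(0 \<le> 0 + (1-K)*pi/3 * t + (-1/2) * t^2 \<and> kern c t1 \<le> kern c t)
      \<or> (0 + (1-K)*pi/3 * t + (-1/2) * t^2 \<le> 0 \<and> kern c t \<le> kern c t1)"
  proof (cases "t \<le> t1")
    case True
    have "kern c t1 \<le> kern c t" by (rule kern_antimono) (use True t t1 assms t0_less_pi pi_gt3 in auto)
    moreover have "0 \<le> (t/2) * (t1 - t)" using True t pi_gt3 by simp
    ultimately show ?thesis unfolding p by simp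
  next
    case False
    have "kern c t \<le> kern c t1" by (rule kern_antimono) (use False t t1 assms t0_less_pi pi_gt3 in auto)
    moreover have "(t/2) * (t1 - t) \<le> 0" using False t pi_gt3 by (simp add: mult_nonneg_nonpos)
    ultimately show ?thesis unfolding p by simp
  qed
  thus "kern c ((1-K)*t0) * ((0 + (1-K)*pi/3 * t + (-1/2) * t^2) * sin t)
      \<le> (0 + (1-K)*pi/3 * t + (-1/2) * t^2) * sin t * kern c t"
    unfolding t1_def using sin_ge_zero[of t] t t0_less_pi pi_gt3 by (intro mult_sin_weight_le) auto
qed (use assms pi_gt3 t0_def in auto)

lemma moment_0_pi_pi_on_t0_pi:
  assumes "c \<ge> 0" "0 \<le> K" "K \<le> 1/4"
  shows "c * kern c ((1-K)*t0) * (sin_moment_prim (pi*t0) (-(pi+t0) - K*pi/3) 1 pi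
                                  - sin_moment_prim (pi*t0) (-(pi+t0) - K*pi/3) 1 t0)
      \<le> kern_moment_prim c (pi*t0) (-(pi+t0) - K*pi/3) 1 pi - kern_moment_prim c (pi*t0) (-(pi+t0) - K*pi/3) 1 t0"
proof (rule kern_moment_prim_ge)
  fix t assume "t \<in> {t0..pi}"
  hence t: "t0 \<le> t" "t \<le> pi" by auto
  have "pi*t0 + (-(pi+t0) - K*pi/3) * t + 1 * t^2 = (t - pi) * (t - t0) - K * pi * t/3"
    by (simp add: power2_eq_square algebra_simps)
  moreover have "(t - pi) * (t - t0) \<le> 0" "0 \<le> K * pi * t/3"
    using t assms t0_pos by (auto simp: mult_nonpos_nonneg)
  moreover have "(1-K)*t0 \<le> t0" using assms t0_pos by (simp add: mult_left_le_one_le)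
  hence "(1-K)*t0 \<le> t" using t by linarith
  hence "kern c t \<le> kern c ((1-K)*t0)"
    using kern_antimono[of c "(1-K)*t0" t] t assms t0_pos by auto
  ultimately show "kern c ((1-K)*t0) * ((pi*t0 + (-(pi+t0) - K*pi/3) * t + 1 * t^2) * sin t)
      \<le> (pi*t0 + (-(pi+t0) - K*pi/3) * t + 1 * t^2) * sin t * kern c t"
    using sin_ge_zero[of t] t t0_pos by (intro mult_sin_weight_le) auto
qed (use assms t0_less_pi t0_pos in auto)

lemma moments_0_pi_pi_lower:
  assumes "c > 0" "0 \<le> K" "K \<le> 1/4"
  defines "A \<equiv> 1/2 - pi^2/36 + K*pi^2/18 - K*pi * sqrt 3/6" and "I \<equiv> 1/2 - K*pi^2/3"
  shows "c * (exp (c/2) * A + kern c ((1-K)*t0) * (I - A))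
       \<le> 3 * Q c t0 - 2 * Q c pi + pi/3 * (1-K) * J c + K * pi^2 * exp (-c) / 3"
proof -
  have "A = sin_moment_prim 0 ((1-K)*pi/3) (-1/2) (pi/3) - sin_moment_prim 0 ((1-K)*pi/3) (-1/2) 0"
    and "I - A = (sin_moment_prim 0 ((1-K)*pi/3) (-1/2) t0 - sin_moment_prim 0 ((1-K)*pi/3) (-1/2) (pi/3))
        + (sin_moment_prim (pi*t0) (-(pi+t0) - K*pi/3) 1 pi - sin_moment_prim (pi*t0) (-(pi+t0) - K*pi/3) 1 t0)"
    using sin_moments_0_pi_pi[of K] unfolding A_def I_def by simp_all
  hence "c * (exp (c/2) * A + kern c ((1-K)*t0) * (I - A))
      = c * exp (c/2) * (sin_moment_prim 0 ((1-K)*pi/3) (-1/2) (pi/3) - sin_moment_prim 0 ((1-K)*pi/3) (-1/2) 0)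
        + c * kern c ((1-K)*t0) * (sin_moment_prim 0 ((1-K)*pi/3) (-1/2) t0
                                   - sin_moment_prim 0 ((1-K)*pi/3) (-1/2) (pi/3))
        + c * kern c ((1-K)*t0) * (sin_moment_prim (pi*t0) (-(pi+t0) - K*pi/3) 1 pi
                                   - sin_moment_prim (pi*t0) (-(pi+t0) - K*pi/3) 1 t0)"
    by (simp only:) (simp add: algebra_simps)
  also have "\<dots> \<le> (kern_moment_prim c 0 ((1-K)*pi/3) (-1/2) t0 - kern_moment_prim c 0 ((1-K)*pi/3) (-1/2) 0)
      + (kern_moment_prim c (pi*t0) (-(pi+t0) - K*pi/3) 1 pi - kern_moment_prim c (pi*t0) (-(pi+t0) - K*pi/3) 1 t0)"
    using moment_0_pi_pi_on_0_pi3[of c K] moment_0_pi_pi_on_pi3_t0[of c K] moment_0_pi_pi_on_t0_pi[of c K]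
      assms(1-3) by linarith
  also have "\<dots> = 3 * Q c t0 - 2 * Q c pi + pi/3 * (1-K) * J c + K * pi^2 * exp (-c) / 3"
    by (rule moments_0_pi_pi_identity)
  finally show ?thesis .
qed

lemma moments_pi3_pi_identity:
  "(kern_moment_prim c 0 ((1-K)*pi/9) 0 (pi/3) - kern_moment_prim c 0 ((1-K)*pi/9) 0 0)
   + (kern_moment_prim c (-(pi^2/18)) (pi/3 + (1-K)*pi/9) (-1/2) t0
      - kern_moment_prim c (-(pi^2/18)) (pi/3 + (1-K)*pi/9) (-1/2) (pi/3))
   + (kern_moment_prim c (7*pi^2/18) (-((8+K)*pi/9)) (1/2) pi
      - kern_moment_prim c (7*pi^2/18) (-((8+K)*pi/9)) (1/2) t0)
   = 2 * Q c t0 - Q c (pi/3) - Q c pi + pi/9 * (1-K) * J c + K * pi^2 * exp (-c) / 9"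
  unfolding kern_moment_prim_def J_def Q_0 kern_pi t0_def
  by (simp add: power2_eq_square field_simps)

lemma sin_moments_pi3_pi:
  "(sin_moment_prim 0 ((1-K)*pi/9) 0 (pi/3) - sin_moment_prim 0 ((1-K)*pi/9) 0 0)
   + (sin_moment_prim (-(pi^2/18)) (pi/3 + (1-K)*pi/9) (-1/2) t0
      - sin_moment_prim (-(pi^2/18)) (pi/3 + (1-K)*pi/9) (-1/2) (pi/3))
   + (sin_moment_prim (pi^2/3) (-((15+2*K)*pi/18)) (1/2) pi
      - sin_moment_prim (pi^2/3) (-((15+2*K)*pi/18)) (1/2) t0)
   = 1/2 - K*pi^2/9 - pi/18 * (sqrt 3/2 - pi/6)"
  unfolding sin_moment_prim_def t0_def
  by (simp add: cos_60 sin_60 cos_120' sin_120' power2_eq_square field_simps)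

lemma weight_pi3_pi_nonneg:
  assumes "0 \<le> K" "K \<le> 1/4" "pi/3 \<le> t" "t \<le> t0"
  shows "0 \<le> - (pi^2/18) + (pi/3 + (1-K)*pi/9) * t + (-1/2) * t^2"
proof -
  define v where "v = t - pi/3"
  have v: "0 \<le> v" "v \<le> pi/3" using assms unfolding v_def t0_def by auto
  have "v^2 \<le> (pi * v)/3" using mult_left_mono[of v "pi/3" v] v by (simp add: power2_eq_square mult.commute)
  moreover have "pi * v \<le> pi^2/3" using mult_left_mono[of v "pi/3" pi] v pi_gt3 by (simp add: power2_eq_square)
  moreover have "K * (pi * t) \<le> (pi * t)/4"
    using mult_right_mono[of K "1/4" "pi * t"] assms pi_gt3 t0_pos by simp
  moreover have "pi * t = pi * v + pi^2/3" unfolding v_def by (simp add: power2_eq_square field_simps)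
  moreover have "- (pi^2/18) + (pi/3 + (1-K)*pi/9) * t + (-1/2) * t^2 = (pi * t)/9 - K * (pi * t)/9 - v^2/2"
    unfolding v_def by (simp add: power2_eq_square field_simps)
  ultimately show ?thesis by linarith
qed

lemma moment_pi3_pi_on_0_t0:
  assumes "c \<ge> 0" "0 \<le> K" "K \<le> 1/4"
  shows "c * exp (-c/2) * (sin_moment_prim 0 ((1-K)*pi/9) 0 (pi/3) - sin_moment_prim 0 ((1-K)*pi/9) 0 0)
      \<le> kern_moment_prim c 0 ((1-K)*pi/9) 0 (pi/3) - kern_moment_prim c 0 ((1-K)*pi/9) 0 0"
    and "c * exp (-c/2) * (sin_moment_prim (-(pi^2/18)) (pi/3 + (1-K)*pi/9) (-1/2) t0
                           - sin_moment_prim (-(pi^2/18)) (pi/3 + (1-K)*pi/9) (-1/2) (pi/3))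
      \<le> kern_moment_prim c (-(pi^2/18)) (pi/3 + (1-K)*pi/9) (-1/2) t0
         - kern_moment_prim c (-(pi^2/18)) (pi/3 + (1-K)*pi/9) (-1/2) (pi/3)"
proof -
  have kern_ge: "exp (-c/2) \<le> kern c t" if "0 \<le> t" "t \<le> t0" for t
    using kern_antimono[of c t t0] that assms t0_less_pi unfolding kern_t0 by auto
  show "c * exp (-c/2) * (sin_moment_prim 0 ((1-K)*pi/9) 0 (pi/3) - sin_moment_prim 0 ((1-K)*pi/9) 0 0)
      \<le> kern_moment_prim c 0 ((1-K)*pi/9) 0 (pi/3) - kern_moment_prim c 0 ((1-K)*pi/9) 0 0"
  proof (rule kern_moment_prim_ge)
    fix t assume "t \<in> {0..pi/3}"
    thus "exp (-c/2) * ((0 + (1-K)*pi/9 * t + 0 * t^2) * sin t) \<le> (0 + (1-K)*pi/9 * t + 0 * t^2) * sin t * kern c t"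
      using sin_ge_zero[of t] kern_ge[of t] assms pi_gt3 by (intro mult_sin_weight_le) (auto simp: t0_def)
  qed (use assms pi_gt3 in auto)
  show "c * exp (-c/2) * (sin_moment_prim (-(pi^2/18)) (pi/3 + (1-K)*pi/9) (-1/2) t0
                           - sin_moment_prim (-(pi^2/18)) (pi/3 + (1-K)*pi/9) (-1/2) (pi/3))
      \<le> kern_moment_prim c (-(pi^2/18)) (pi/3 + (1-K)*pi/9) (-1/2) t0
         - kern_moment_prim c (-(pi^2/18)) (pi/3 + (1-K)*pi/9) (-1/2) (pi/3)"
  proof (rule kern_moment_prim_ge)
    fix t assume "t \<in> {pi/3..t0}"
    thus "exp (-c/2) * ((- (pi^2/18) + (pi/3 + (1-K)*pi/9) * t + (-1/2) * t^2) * sin t)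
        \<le> (- (pi^2/18) + (pi/3 + (1-K)*pi/9) * t + (-1/2) * t^2) * sin t * kern c t"
      using sin_ge_zero[of t] kern_ge[of t] weight_pi3_pi_nonneg[OF assms(2,3), of t] t0_less_pi pi_gt3
      by (intro mult_sin_weight_le) auto
  qed (use assms pi_gt3 t0_def in auto)
qed

lemma moment_pi3_pi_on_t0_pi:
  assumes "c \<ge> 0" "0 \<le> K"
  shows "c * exp (-c/2) * (sin_moment_prim (pi^2/3) (-((15+2*K)*pi/18)) (1/2) pi
                           - sin_moment_prim (pi^2/3) (-((15+2*K)*pi/18)) (1/2) t0)
      \<le> kern_moment_prim c (7*pi^2/18) (-((8+K)*pi/9)) (1/2) pi
         - kern_moment_prim c (7*pi^2/18) (-((8+K)*pi/9)) (1/2) t0"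
proof (rule kern_moment_prim_ge)
  fix t assume "t \<in> {t0..pi}"
  hence t: "t0 \<le> t" "t \<le> pi" by auto
  define u where "u = pi - t"
  have u: "0 \<le> u" "u \<le> pi/3" using t unfolding u_def t0_def by auto
  have p: "7*pi^2/18 + (-((8+K)*pi/9)) * t + (1/2) * t^2 = u * (u/2 - pi/9) - K * pi * t/9"
    and q: "pi^2/3 + (-((15+2*K)*pi/18)) * t + (1/2) * t^2
            = (7*pi^2/18 + (-((8+K)*pi/9)) * t + (1/2) * t^2) - u * (pi/18)"
    unfolding u_def by (simp_all add: power2_eq_square field_simps)
  have "u * (u/2 - pi/9) \<le> u * (pi/18)" using u by (intro mult_left_mono) auto
  moreover have "0 \<le> K * pi * t/9" using assms t t0_pos by auto
  ultimately have "7*pi^2/18 + (-((8+K)*pi/9)) * t + (1/2) * t^2 \<le> u * (pi/18)" unfolding p by linarith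
  moreover have "kern c t \<le> exp (-c/2)"
    using kern_antimono[of c t0 t] t assms t0_pos unfolding kern_t0 by auto
  ultimately show "exp (-c/2) * ((pi^2/3 + (-((15+2*K)*pi/18)) * t + (1/2) * t^2) * sin t)
      \<le> (7*pi^2/18 + (-((8+K)*pi/9)) * t + (1/2) * t^2) * sin t * kern c t"
    unfolding q using sin_ge_zero[of t] t t0_pos kern_pos[of c t] u pi_gt3
    by (intro mult_sin_weight_shift_le) auto
qed (use assms t0_less_pi t0_pos in auto)

lemma moments_pi3_pi_lower:
  assumes "c > 0" "0 \<le> K" "K \<le> 1/4"
  shows "c * exp (-c/2) * (1/2 - K*pi^2/9 - pi/18 * (sqrt 3/2 - pi/6))
       \<le> 2 * Q c t0 - Q c (pi/3) - Q c pi + pi/9 * (1-K) * J c + K * pi^2 * exp (-c) / 9"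
  using moment_pi3_pi_on_0_t0[of c K] moment_pi3_pi_on_t0_pi[of c K] assms
  unfolding moments_pi3_pi_identity[of c K, symmetric] sin_moments_pi3_pi[of K, symmetric]
  by (simp add: algebra_simps)

section \<open>Numerical estimates\<close>

lemma pi_bounds: "31415/10000 \<le> pi" "pi \<le> 31416/10000"
  using pi_approx by auto

lemma pi_squared_bounds: "98690/10000 \<le> pi^2" "pi^2 \<le> 98697/10000"
proof -
  have "(31415/10000::real)^2 \<le> pi^2" using pi_bounds by (intro power_mono) auto
  thus "98690/10000 \<le> pi^2" by (simp add: power2_eq_square)
  have "pi^2 \<le> (31416/10000::real)^2" using pi_bounds by (intro power_mono) auto
  thus "pi^2 \<le> 98697/10000" by (simp add: power2_eq_square)
qed

lemma pi_sqrt3_bounds: "54410/10000 \<le> pi * sqrt 3" "pi * sqrt 3 \<le> 54416/10000"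
proof -
  have "1732/1000 \<le> sqrt 3" by (rule real_le_rsqrt) (simp add: power2_eq_square)
  moreover have "sqrt 3 \<le> sqrt ((17321/10000)^2)" by (subst real_sqrt_le_iff) (simp add: power2_eq_square)
  ultimately have s: "1732/1000 \<le> sqrt 3" "sqrt 3 \<le> 17321/10000" by simp_all
  have "(31415/10000) * (1732/1000) \<le> pi * sqrt 3" using pi_bounds s by (intro mult_mono) auto
  thus "54410/10000 \<le> pi * sqrt 3" by simp
  have "pi * sqrt 3 \<le> (31416/10000) * (17321/10000)" using pi_bounds s by (intro mult_mono) auto
  thus "pi * sqrt 3 \<le> 54416/10000" by simp
qed

lemma three_powr_four_thirds_bounds:
  "864/1000 \<le> (3::real) powr (4/3) / 5" "(3::real) powr (4/3) / 5 \<le> 1"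
proof -
  define x where "x = (3::real) powr (4/3)"
  have "x ^ 3 = 3 powr (4/3 * 3)"
    unfolding x_def by (simp add: powr_powr flip: powr_realpow)
  hence x3: "x ^ 3 = 81" by simp
  have "x \<ge> 432/100"
  proof (rule ccontr)
    assume "\<not> x \<ge> 432/100"
    hence "x^3 < (432/100)^3" unfolding x_def by (intro power_strict_mono) auto
    thus False using x3 by (simp add: power3_eq_cube)
  qed
  moreover have "x \<le> 5"
  proof (rule ccontr)
    assume "\<not> x \<le> 5"
    hence "5^3 < x^3" by (intro power_strict_mono) auto
    thus False using x3 by simp
  qed
  ultimately show "864/1000 \<le> (3::real) powr (4/3) / 5" "(3::real) powr (4/3) / 5 \<le> 1"
    unfolding x_def by auto
qed

lemma K_bounds:
  fixes c :: real
  assumes "c > 0"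
  defines "K \<equiv> 0.158 * (1 - (1 - 3 powr (4/3) / 5) * exp (- c * pi / 2) - 3 powr (4/3) / 5 * exp (- c * pi / 6))"
  shows "0 \<le> K" "K \<le> 158/1000" "K \<le> 1053/10000 * c"
proof -
  define a where "a = 3 powr (4/3) / (5::real)"
  define e1 where "e1 = exp (- c * pi / 2)"
  define e2 where "e2 = exp (- c * pi / 6)"
  have a: "864/1000 \<le> a" "a \<le> 1" unfolding a_def using three_powr_four_thirds_bounds by auto
  have e: "0 \<le> e1" "e1 \<le> 1" "0 \<le> e2" "e2 \<le> 1" unfolding e1_def e2_def using assms pi_gt_zero by auto
  have K: "K = 158/1000 * ((1-a) * (1 - e1) + a * (1 - e2))"
    unfolding K_def a_def e1_def e2_def by (simp add: field_simps)
  have "0 \<le> (1-a) * (1 - e1)" "0 \<le> a * (1 - e2)" "(1-a) * (1 - e1) \<le> 1 - a" "a * (1 - e2) \<le> a"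
    using a e by (auto simp: mult_left_le)
  thus "0 \<le> K" "K \<le> 158/1000" unfolding K by simp_all
  have "1 - e1 \<le> c * pi/2" "1 - e2 \<le> c * pi/6"
    using exp_ge_add_one_self[of "- c * pi / 2"] exp_ge_add_one_self[of "- c * pi / 6"]
    unfolding e1_def e2_def by simp_all
  hence "(1-a) * (1 - e1) + a * (1 - e2) \<le> (1-a) * (c * pi/2) + a * (c * pi/6)"
    using a by (intro add_mono mult_left_mono) auto
  also have "\<dots> = (c * pi) * (1/2 - a/3)" by (simp add: field_simps)
  also have "\<dots> \<le> (c * (31416/10000)) * (212/1000)"
    using a assms pi_bounds by (intro mult_mono) auto
  finally show "K \<le> 1053/10000 * c" unfolding K using assms by simp
qed

lemma scalar_pi3_pi_bound:
  assumes "c > 0" "0 \<le> K" "K \<le> 158/1000" "K \<le> 1053/10000 * c"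
  shows "K * pi^2 * exp (-c) / 9 \<le> c * exp (-c/2) * (1/2 - K*pi^2/9 - pi/18 * (sqrt 3/2 - pi/6))"
proof -
  have Kpi: "K * pi^2 \<le> K * (98697/10000)" using assms pi_squared_bounds by (intro mult_left_mono) auto
  have eq: "1/2 - K*pi^2/9 - pi/18 * (sqrt 3/2 - pi/6) = 1/2 - (K*pi^2)/9 - (pi * sqrt 3)/36 + pi^2/108"
    by (simp add: field_simps power2_eq_square)
  have coeff: "44/100 - 10967/10000 * K \<le> 1/2 - K*pi^2/9 - pi/18 * (sqrt 3/2 - pi/6)"
    unfolding eq using Kpi pi_sqrt3_bounds pi_squared_bounds assms(2) by linarith
  have cK: "c * K \<le> 1053/10000 * c * c \<and> c * K \<le> 158/1000 * c"
    using mult_left_mono[OF assms(4), of c] mult_left_mono[OF assms(3), of c] assms(1)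
    by (simp add: algebra_simps)
  have "c * c \<le> 3/2 * c \<or> 3/2 \<le> c" using assms(1) by (cases "c \<le> 3/2") (auto intro: mult_right_mono)
  moreover have "c * (44/100 - 10967/10000 * K) = 44/100 * c - 10967/10000 * (c * K)"
    by (simp add: algebra_simps)
  ultimately have "10967/10000 * K \<le> c * (44/100 - 10967/10000 * K)"
    using cK assms by linarith
  have "exp (-c) \<le> exp (-c/2)" using assms(1) by simp
  hence "(K * pi^2 / 9) * exp (-c) \<le> (10967/10000 * K) * exp (-c/2)"
    using Kpi assms(2) by (intro mult_mono) auto
  hence "K * pi^2 * exp (-c) / 9 \<le> exp (-c/2) * (10967/10000 * K)" by (simp add: algebra_simps)
  also have "\<dots> \<le> exp (-c/2) * (c * (44/100 - 10967/10000 * K))"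
    using \<open>10967/10000 * K \<le> _\<close> by (intro mult_left_mono) auto
  also have "\<dots> \<le> c * exp (-c/2) * (1/2 - K*pi^2/9 - pi/18 * (sqrt 3/2 - pi/6))"
    using mult_left_mono[OF coeff, of "c * exp (-c/2)"] assms(1) by (simp add: algebra_simps)
  finally show ?thesis .
qed

text \<open>In the next lemmas \<open>A\<close> and \<open>I\<close> are the coefficients of \<open>scalar_0_pi_pi_bound\<close>, used only
  through their linear bounds in \<open>K\<close>; \<open>32899/10000\<close> bounds \<open>pi\<^sup>2/3\<close> from above.\<close>

lemma poly_0_pi_pi_small_K:
  fixes c K A I :: real
  assumes "0 < c" "0 \<le> K" "K \<le> 1053/10000 * c" "K \<le> 936/10000"
    and "2258/10000 - 3587/10000 * K \<le> A" "0 \<le> A" "1/2 - 32899/10000 * K \<le> I"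
  shows "32899/10000 * K \<le> c * (I + (c + c^2/2) * A)"
proof -
  have expand: "c * (I + (c + c^2/2) * A) = c * I + (c * c) * A + (c * c * c / 2) * A"
    by (simp add: power2_eq_square algebra_simps)
  have cI: "1/2 * c - 32899/10000 * (c * K) \<le> c * I"
    using mult_left_mono[OF assms(7), of c] assms(1) by (simp add: algebra_simps)
  have "0 \<le> (c * c * c / 2) * A" using assms(1,6) by simp
  show ?thesis
  proof (cases "c \<le> 888/1000")
    case True
    have cK: "c * K \<le> 1053/10000 * (c * c)" "(c * c) * K \<le> 1053/10000 * (c * c * c)"
      using mult_left_mono[OF assms(3), of c] mult_left_mono[OF assms(3), of "c * c"] assms(1)
      by (simp_all add: algebra_simps)
    have "c * c \<le> 888/1000 * c" "c * c * c \<le> 888/1000 * (c * c)"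
      using True assms(1) by (simp_all add: mult_right_mono mult_left_mono)
    moreover have "2258/10000 * (c * c) - 3587/10000 * ((c * c) * K) \<le> (c * c) * A"
      using mult_left_mono[OF assms(5), of "c * c"] by (simp add: algebra_simps)
    ultimately show ?thesis
      unfolding expand using cI cK \<open>0 \<le> (c * c * c / 2) * A\<close> assms by linarith
  next
    case False
    have "19206/100000 \<le> I" "19222/100000 \<le> A" using assms by linarith+
    hence "19206/100000 * c \<le> c * I" "19222/100000 * (c * c) \<le> (c * c) * A"
      using mult_left_mono[of "19206/100000" I c] mult_left_mono[of "19222/100000" A "c * c"] assms
      by (auto simp: mult.commute)
    moreover have "888/1000 * (888/1000) \<le> c * c" using False by (intro mult_mono) auto
    ultimately show ?thesis
      unfolding expand using \<open>0 \<le> (c * c * c / 2) * A\<close> False assms by linarith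
  qed
qed

lemma poly_0_pi_pi_mono:
  fixes l c iL aL I A v :: real
  assumes "0 \<le> l" "l \<le> c" "iL \<le> I" "aL \<le> A" "0 \<le> aL" "0 \<le> iL + (l/2 + l^2/8) * aL"
    and "v \<le> (iL + (l/2 + l^2/8) * aL) * (1 + l + l^2/2)"
  shows "v \<le> (I + (c/2 + c^2/8) * A) * (1 + c + c^2/2)"
proof -
  have sq: "l^2 \<le> c^2" using assms by (intro power_mono) auto
  hence "l/2 + l^2/8 \<le> c/2 + c^2/8" using assms by linarith
  hence "(l/2 + l^2/8) * aL \<le> (c/2 + c^2/8) * A" using assms by (intro mult_mono) auto
  hence "iL + (l/2 + l^2/8) * aL \<le> I + (c/2 + c^2/8) * A" using assms by linarith
  moreover have "1 + l + l^2/2 \<le> 1 + c + c^2/2" using sq assms by linarith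
  ultimately have "(iL + (l/2 + l^2/8) * aL) * (1 + l + l^2/2) \<le> (I + (c/2 + c^2/8) * A) * (1 + c + c^2/2)"
    using assms by (intro mult_mono) auto
  thus ?thesis using assms(7) by linarith
qed

lemma poly_0_pi_pi_value_bounds:
  fixes c K A I :: real
  assumes "887/1000 \<le> c" "0 \<le> K" "K \<le> 158/1000" "K \<le> 1053/10000 * c"
    and "2258/10000 - 3587/10000 * K \<le> A" "1/2 - 32899/10000 * K \<le> I"
  defines "P \<equiv> (I + (c/2 + c^2/8) * A) * (1 + c + c^2/2)"
  shows "34643/100000 \<le> P \<or> (15/10 \<le> c \<and> 5604/10000 \<le> P)"
proof -
  consider "c \<le> 12/10" | "12/10 \<le> c" "c \<le> 135/100" | "135/100 \<le> c" "c \<le> 15/10" | "15/10 \<le> c"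
    by linarith
  thus ?thesis
  proof cases
    case 1
    have "34643/100000 \<le> P" unfolding P_def
      by (rule poly_0_pi_pi_mono[where l = "887/1000" and iL = "8428/100000" and aL = "18047/100000"])
         (use assms 1 in \<open>auto simp: power2_eq_square\<close>)
    thus ?thesis ..
  next
    case 2
    have "34643/100000 \<le> P" unfolding P_def
      by (rule poly_0_pi_pi_mono[where l = "12/10" and iL = "3232/100000" and aL = "1748/10000"])
         (use assms 2 in \<open>auto simp: power2_eq_square\<close>)
    thus ?thesis ..
  next
    case 3
    have "34643/100000 \<le> P" unfolding P_def
      by (rule poly_0_pi_pi_mono[where l = "135/100" and iL = "-1981/100000" and aL = "16912/100000"])
         (use assms 3 in \<open>auto simp: power2_eq_square\<close>)
    thus ?thesis ..
  next
    case 4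
    have "5604/10000 \<le> P" unfolding P_def
      by (rule poly_0_pi_pi_mono[where l = "15/10" and iL = "-1981/100000" and aL = "16912/100000"])
         (use assms 4 in \<open>auto simp: power2_eq_square\<close>)
    thus ?thesis using 4 by simp
  qed
qed

lemma poly_0_pi_pi_large_K:
  fixes c K A I :: real
  assumes "887/1000 \<le> c" "0 \<le> K" "K \<le> 158/1000" "K \<le> 1053/10000 * c"
    and "2258/10000 - 3587/10000 * K \<le> A" "1/2 - 32899/10000 * K \<le> I"
  shows "32899/10000 * K \<le> c * ((I + (c/2 + c^2/8) * A) * (1 + c + c^2/2))"
  using poly_0_pi_pi_value_bounds[OF assms]
proof
  assume "34643/100000 \<le> (I + (c/2 + c^2/8) * A) * (1 + c + c^2/2)"
  from mult_left_mono[OF this, of c] show ?thesis using assms by linarith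
next
  assume "15/10 \<le> c \<and> 5604/10000 \<le> (I + (c/2 + c^2/8) * A) * (1 + c + c^2/2)"
  hence "15/10 * (5604/10000) \<le> c * ((I + (c/2 + c^2/8) * A) * (1 + c + c^2/2))"
    by (intro mult_mono) auto
  thus ?thesis using assms by linarith
qed

lemma scalar_0_pi_pi_small_K:
  fixes c K A I G :: real
  assumes "0 < c" "0 \<le> K" "K \<le> 1053/10000 * c" "K \<le> 936/10000"
    and "2258/10000 - 3587/10000 * K \<le> A" "0 \<le> A" "1/2 - 32899/10000 * K \<le> I" "A \<le> I"
    and "exp (-c/2) \<le> G"
  shows "32899/10000 * K * exp (-c) \<le> c * (exp (c/2) * A + G * (I - A))"
proof -
  have "exp (-c/2) * exp c = exp (c/2)" by (simp flip: exp_add)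
  hence "c * (exp (c/2) * A + exp (-c/2) * (I - A)) = exp (-c/2) * (c * (I + (exp c - 1) * A))"
    by (simp add: algebra_simps)
  also have "\<dots> \<ge> exp (-c/2) * (c * (I + (c + c^2/2) * A))"
    using exp_lower_Taylor_quadratic[of c] assms by (intro mult_left_mono add_left_mono mult_right_mono) auto
  also have "exp (-c/2) * (c * (I + (c + c^2/2) * A)) \<ge> exp (-c/2) * (32899/10000 * K)"
    using poly_0_pi_pi_small_K[OF assms(1-7)] by (intro mult_left_mono) auto
  also have "exp (-c/2) * (32899/10000 * K) \<ge> exp (-c) * (32899/10000 * K)"
    using assms by (intro mult_right_mono) auto
  finally have "32899/10000 * K * exp (-c) \<le> c * (exp (c/2) * A + exp (-c/2) * (I - A))"
    by (simp add: algebra_simps)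
  also have "\<dots> \<le> c * (exp (c/2) * A + G * (I - A))"
    using assms by (intro mult_left_mono add_left_mono mult_right_mono) auto
  finally show ?thesis .
qed

lemma scalar_0_pi_pi_large_K:
  fixes c K A I G :: real
  assumes "887/1000 \<le> c" "0 \<le> K" "K \<le> 158/1000" "K \<le> 1053/10000 * c"
    and "2258/10000 - 3587/10000 * K \<le> A" "0 \<le> A" "1/2 - 32899/10000 * K \<le> I" "I \<le> A"
    and "G \<le> 1"
  shows "32899/10000 * K * exp (-c) \<le> c * (exp (c/2) * A + G * (I - A))"
proof -
  define M where "M = I + (c/2 + c^2/8) * A"
  define P where "P = 1 + c + c^2/2"
  have cMP: "32899/10000 * K \<le> c * (M * P)"
    unfolding M_def P_def by (rule poly_0_pi_pi_large_K[OF assms(1-5,7)])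
  have "0 < c" "0 < P" using assms(1) by (auto simp: P_def add_pos_nonneg)
  moreover have "0 \<le> c * (M * P)" using cMP assms(2) by linarith
  ultimately have "0 \<le> c * M" by (simp add: zero_le_mult_iff)
  have "exp (-c) * P \<le> 1"
    using exp_lower_Taylor_quadratic[of c] \<open>0 < c\<close> by (simp add: P_def exp_minus field_simps)
  hence "exp (-c) * (c * (M * P)) \<le> c * M"
    using mult_left_mono[of "exp (-c) * P" 1 "c * M"] \<open>0 \<le> c * M\<close> by (simp add: algebra_simps)
  have "32899/10000 * K * exp (-c) \<le> exp (-c) * (c * (M * P))"
    using mult_left_mono[OF cMP, of "exp (-c)"] by (simp add: mult.commute)
  also have "\<dots> \<le> c * M" by fact
  also have "c * M \<le> c * (exp (c/2) * A + 1 * (I - A))"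
  proof -
    have "1 + c/2 + (c/2)^2/2 \<le> exp (c/2)" using exp_lower_Taylor_quadratic[of "c/2"] \<open>0 < c\<close> by simp
    hence "(1 + c/2 + c^2/8) * A \<le> exp (c/2) * A"
      using assms(6) by (intro mult_right_mono) (auto simp: power2_eq_square)
    hence "M \<le> exp (c/2) * A + 1 * (I - A)" unfolding M_def by (simp add: algebra_simps)
    thus ?thesis using \<open>0 < c\<close> by (intro mult_left_mono) auto
  qed
  also have "\<dots> \<le> c * (exp (c/2) * A + G * (I - A))"
    using assms \<open>0 < c\<close> by (intro mult_left_mono add_left_mono mult_right_mono_neg) auto
  finally show ?thesis .
qed

lemma scalar_0_pi_pi_bound:
  assumes "c > 0" "0 \<le> K" "K \<le> 158/1000" "K \<le> 1053/10000 * c" "exp (-c/2) \<le> G" "G \<le> 1"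
  defines "A \<equiv> 1/2 - pi^2/36 + K*pi^2/18 - K*pi * sqrt 3/6" and "I \<equiv> 1/2 - K*pi^2/3"
  shows "K * pi^2 * exp (-c) / 3 \<le> c * (exp (c/2) * A + G * (I - A))"
proof -
  note Kpi = mult_left_mono[OF pi_squared_bounds(1) assms(2)] mult_left_mono[OF pi_squared_bounds(2) assms(2)]
    mult_left_mono[OF pi_sqrt3_bounds(1) assms(2)] mult_left_mono[OF pi_sqrt3_bounds(2) assms(2)]
  have "A = 1/2 - pi^2/36 + (K * pi^2)/18 - (K * (pi * sqrt 3))/6" "I = 1/2 - (K * pi^2)/3"
    unfolding A_def I_def by (simp_all add: field_simps)
  hence A: "2258/10000 - 3587/10000 * K \<le> A" "A \<le> 2259/10000 - 3585/10000 * K" "0 \<le> A"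
    and I: "1/2 - 32899/10000 * K \<le> I" "I \<le> 1/2 - 32896/10000 * K"
    using Kpi pi_squared_bounds assms(2,3) by linarith+
  have "32899/10000 * K * exp (-c) \<le> c * (exp (c/2) * A + G * (I - A))"
    \<comment> \<open>affine in \<open>G\<close>: the worst case is \<open>G = exp (-c/2)\<close> or \<open>G = 1\<close> according to the sign of \<open>I - A\<close>\<close>
  proof (cases "A \<le> I")
    case True
    thus ?thesis using A I assms by (intro scalar_0_pi_pi_small_K) linarith+
  next
    case False
    thus ?thesis using A I assms by (intro scalar_0_pi_pi_large_K) linarith+
  qed
  moreover have "K * pi^2 / 3 \<le> 32899/10000 * K" using Kpi by linarith
  hence "K * pi^2 * exp (-c) / 3 \<le> 32899/10000 * K * exp (-c)"
    using mult_right_mono[of "K * pi^2 / 3" "32899/10000 * K" "exp (-c)"] by simp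
  ultimately show ?thesis by linarith
qed

lemma J_ge_pi: "pi \<le> J c"
proof -
  have "((\<lambda>t. 1 + c * cos t) has_integral ((\<lambda>t. t + c * sin t) pi - (\<lambda>t. t + c * sin t) 0)) {0..pi}"
    by (rule has_integral_of_real_derivative) (auto intro!: derivative_eq_intros)
  moreover have "(kern c has_integral (kern_prim c pi - kern_prim c 0)) {0..pi}"
    by (rule has_integral_of_real_derivative) (use pi_gt3 in \<open>auto intro!: kern_prim_has_real_derivative\<close>)
  ultimately have "(\<lambda>t. t + c * sin t) pi - (\<lambda>t. t + c * sin t) 0 \<le> kern_prim c pi - kern_prim c 0"
    by (rule has_integral_le) (simp add: kern_def)
  thus ?thesis unfolding J_def by simp
qed

lemma kern_t0_le_curvature:
  assumes "c > 0" "0 \<le> K" "K \<le> 158/1000" "K \<le> 1053/10000 * c"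
  shows "kern c t0 \<le> (1 - K) * J c / pi"
proof -
  have "1 \<le> (1 - K) * (1 + c/2)"
  proof (cases "c \<le> 1")
    case True
    have "c * K \<le> 1053/10000 * (c * c)" "c * c \<le> c"
      using mult_left_mono[OF assms(4), of c] mult_left_mono[OF True, of c] assms(1) by simp_all
    moreover have "(1 - K) * (1 + c/2) = 1 + c/2 - K - (c * K)/2" by (simp add: field_simps)
    ultimately show ?thesis using assms by linarith
  next
    case False
    have "842/1000 * (3/2) \<le> (1 - K) * (1 + c/2)" using assms False by (intro mult_mono) auto
    thus ?thesis by simp
  qed
  moreover have "exp (-c/2) * (1 + c/2) \<le> 1"
    using exp_ge_add_one_self[of "c/2"] by (simp add: exp_minus field_simps)
  ultimately have "exp (-c/2) * 1 \<le> (1 - K) * (exp (-c/2) * (1 + c/2))"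
    using mult_left_mono[of 1 "(1 - K) * (1 + c/2)" "exp (-c/2)"] by (simp add: algebra_simps)
  also have "\<dots> \<le> (1 - K) * 1"
    using \<open>exp (-c/2) * (1 + c/2) \<le> 1\<close> assms(3) by (intro mult_left_mono) auto
  finally have "exp (-c/2) \<le> 1 - K" by simp
  also have "1 - K \<le> (1 - K) * J c / pi"
    using mult_left_mono[OF J_ge_pi, of "1 - K" c] assms(3) pi_gt3 by (simp add: field_simps)
  finally show ?thesis unfolding kern_t0 .
qed

lemma kern_shifted_t0_bounds:
  assumes "c \<ge> 0" "0 \<le> K" "K \<le> 1/4"
  shows "exp (-c/2) \<le> kern c ((1 - K) * t0)" "kern c ((1 - K) * t0) \<le> 1"
proof -
  have "pi/2 \<le> (1 - K) * t0" "(1 - K) * t0 \<le> t0"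
    using assms mult_right_mono[of "3/4" "1 - K" t0] mult_left_le_one_le[of t0 "1 - K"] t0_pos
    by (auto simp: t0_def)
  thus "exp (-c/2) \<le> kern c ((1 - K) * t0)" "kern c ((1 - K) * t0) \<le> 1"
    using kern_antimono[of c "(1 - K) * t0" t0] kern_antimono[of c "pi/2" "(1 - K) * t0"]
      assms(1) t0_less_pi pi_gt3 unfolding kern_t0 by (auto simp: kern_def)
qed

lemma defect_0_pi_pi_nonpos:
  assumes "c > 0" "0 \<le> K" "K \<le> 158/1000" "K \<le> 1053/10000 * c"
  shows "defect c ((1 - K) * J c / pi) 0 + 2 * defect c ((1 - K) * J c / pi) pi \<le> 0"
proof -
  have "defect c ((1 - K) * J c / pi) 0 + 2 * defect c ((1 - K) * J c / pi) pi
      = 2 * Q c pi - 3 * Q c t0 - pi/3 * (1 - K) * J c"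
    unfolding defect_def Q_0 t0_def using pi_gt3 by (simp add: field_simps power2_eq_square)
  moreover have "K * pi^2 * exp (-c) / 3
      \<le> 3 * Q c t0 - 2 * Q c pi + pi/3 * (1 - K) * J c + K * pi^2 * exp (-c) / 3"
  proof -
    have "K \<le> 1/4" using assms by simp
    note G = kern_shifted_t0_bounds[OF _ assms(2) this]
    show ?thesis
      using order_trans[OF scalar_0_pi_pi_bound[OF assms G] moments_0_pi_pi_lower[OF assms(1,2) \<open>K \<le> 1/4\<close>]]
      using assms(1) by simp
  qed
  ultimately show ?thesis by linarith
qed

lemma defect_pi3_pi_nonpos:
  assumes "c > 0" "0 \<le> K" "K \<le> 158/1000" "K \<le> 1053/10000 * c"
  shows "defect c ((1 - K) * J c / pi) (pi/3) + defect c ((1 - K) * J c / pi) pi \<le> 0"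
proof -
  have "defect c ((1 - K) * J c / pi) (pi/3) + defect c ((1 - K) * J c / pi) pi
      = Q c (pi/3) + Q c pi - 2 * Q c t0 - pi/9 * (1 - K) * J c"
    unfolding defect_def t0_def using pi_gt3 by (simp add: field_simps power2_eq_square)
  moreover have "K * pi^2 * exp (-c) / 9
      \<le> 2 * Q c t0 - Q c (pi/3) - Q c pi + pi/9 * (1 - K) * J c + K * pi^2 * exp (-c) / 9"
    using order_trans[OF scalar_pi3_pi_bound[OF assms] moments_pi3_pi_lower[OF assms(1,2)]] assms by simp
  ultimately show ?thesis by linarith
qed

lemma F_sum_eq_defect_sum:
  assumes "\<theta>1 \<in> {0..pi}" "\<theta>2 \<in> {0..pi}" "\<theta>3 \<in> {0..pi}" "\<theta>1 + \<theta>2 + \<theta>3 = 2 * pi" "J c \<noteq> 0"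
  shows "- 3 * F c (2 * pi / 3) + (F c \<theta>1 + F c \<theta>2 + F c \<theta>3)
    = (defect c lam \<theta>1 + defect c lam \<theta>2 + defect c lam \<theta>3) / (2 * pi * J c)
      + (lam * pi / J c - 1) * ((\<theta>1 / (2*pi) - 1/3)^2 + (\<theta>2 / (2*pi) - 1/3)^2 + (\<theta>3 / (2*pi) - 1/3)^2)"
proof -
  define S where "S = (\<theta>1 - t0)^2 + (\<theta>2 - t0)^2 + (\<theta>3 - t0)^2"
  define X where "X = Q c \<theta>1 + Q c \<theta>2 + Q c \<theta>3 - 3 * Q c t0"
  have sum: "\<theta>1 + \<theta>2 + \<theta>3 = 3 * t0" using assms(4) by (simp add: t0_def)
  have dev: "(\<theta>1 / (2*pi) - 1/3)^2 + (\<theta>2 / (2*pi) - 1/3)^2 + (\<theta>3 / (2*pi) - 1/3)^2 = S / (4 * pi^2)"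
    unfolding S_def t0_def by (simp add: field_simps power2_eq_square)
  have "S = \<theta>1^2 + \<theta>2^2 + \<theta>3^2 - 2 * t0 * (\<theta>1 + \<theta>2 + \<theta>3) + 3 * t0^2"
    unfolding S_def by (simp add: power2_eq_square algebra_simps)
  hence S: "S = \<theta>1^2 + \<theta>2^2 + \<theta>3^2 - 3 * t0^2" unfolding sum by (simp add: power2_eq_square)
  have "(\<theta>1 / (2*pi))^2 + (\<theta>2 / (2*pi))^2 + (\<theta>3 / (2*pi))^2 - 3 * (t0 / (2*pi))^2 = S / (4 * pi^2)"
    unfolding S by (simp add: power2_eq_square field_simps)
  hence F_sum: "- 3 * F c (2 * pi / 3) + (F c \<theta>1 + F c \<theta>2 + F c \<theta>3) = X / (2 * pi * J c) - S / (4 * pi^2)"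
    using assms(1-3) t0_pos t0_less_pi
    by (simp add: F_eq_Q X_def t0_def[symmetric] diff_divide_distrib add_divide_distrib)
  have "defect c lam \<theta>1 + defect c lam \<theta>2 + defect c lam \<theta>3
      = X - (kern_prim c t0 - kern_prim c 0) * (\<theta>1 + \<theta>2 + \<theta>3 - 3 * t0) - lam * S / 2"
    unfolding defect_def X_def S_def by (simp add: field_simps)
  hence defect_sum: "defect c lam \<theta>1 + defect c lam \<theta>2 + defect c lam \<theta>3 = X - lam * S / 2"
    unfolding sum by simp
  show ?thesis
    unfolding F_sum defect_sum dev using assms(5) pi_gt3 by (simp add: field_simps power2_eq_square)
qed

theorem lemma3p3:
  fixes c \<theta>1 \<theta>2 \<theta>3 :: real
  assumes "c > 0"
    and "\<theta>1 \<ge> 0" and "\<theta>2 \<ge> 0" and "\<theta>3 \<ge> 0"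
    and "\<theta>1 + \<theta>2 + \<theta>3 = 2 * pi"
    and "\<theta>1 \<le> pi" and "\<theta>2 \<le> pi" and "\<theta>3 \<le> pi"
  shows "- 3 * F c (2 * pi / 3) + (F c \<theta>1 + F c \<theta>2 + F c \<theta>3)
         \<le> 0.158 * (- 1 + (1 - 3 powr (4/3) / 5) * exp (- c * pi / 2)
                    + 3 powr (4/3) / 5 * exp (- c * pi / 6))
           * ((\<theta>1 / (2*pi) - 1/3)^2 + (\<theta>2 / (2*pi) - 1/3)^2 + (\<theta>3 / (2*pi) - 1/3)^2)"
proof -
  define K where "K = 0.158 * (1 - (1 - 3 powr (4/3) / 5) * exp (- c * pi / 2)
                              - 3 powr (4/3) / 5 * exp (- c * pi / 6))"
  have K: "0 \<le> K" "K \<le> 158/1000" "K \<le> 1053/10000 * c"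
    unfolding K_def by (fact K_bounds[OF assms(1)])+
  define lam where "lam = (1 - K) * J c / pi"
  have J: "0 < J c" using J_ge_pi[of c] pi_gt3 by linarith
  have "defect c lam \<theta>1 + defect c lam \<theta>2 + defect c lam \<theta>3 \<le> 0"
    unfolding lam_def
    by (rule defect_sum_nonpos[OF _ kern_t0_le_curvature[OF assms(1) K]
          defect_pi3_pi_nonpos[OF assms(1) K] defect_0_pi_pi_nonpos[OF assms(1) K]])
       (use assms in auto)
  hence nonpos: "(defect c lam \<theta>1 + defect c lam \<theta>2 + defect c lam \<theta>3) / (2 * pi * J c) \<le> 0"
    using J by (simp add: divide_nonpos_pos)
  have curvature: "lam * pi / J c - 1 = - K" unfolding lam_def using J by (simp add: field_simps)
  have theorem_constant: "0.158 * (- 1 + (1 - 3 powr (4/3) / 5) * exp (- c * pi / 2)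
                   + 3 powr (4/3) / 5 * exp (- c * pi / 6)) = - K"
    unfolding K_def by (simp add: algebra_simps)
  have "- 3 * F c (2 * pi / 3) + (F c \<theta>1 + F c \<theta>2 + F c \<theta>3)
    = (defect c lam \<theta>1 + defect c lam \<theta>2 + defect c lam \<theta>3) / (2 * pi * J c)
      + (lam * pi / J c - 1) * ((\<theta>1 / (2*pi) - 1/3)^2 + (\<theta>2 / (2*pi) - 1/3)^2 + (\<theta>3 / (2*pi) - 1/3)^2)"
    by (rule F_sum_eq_defect_sum) (use assms J in auto)
  thus ?thesis unfolding curvature theorem_constant using nonpos by simp
qed

end
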